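(* For every integer $m\geq 3$, the complete sun $KS_m$ satisfies $\eta(KS_m)=\lceil (m+2)/3\rceil$.
   Context: All graphs are finite, simple and undirected. Indices are taken modulo $m$, so $u_0=u_m$ and $v_0=v_m$. The complete sun $KS_m$ has vertices $u_1,\dots,u_m,v_1,\dots,v_m$, where $\{u_1,\dots,u_m\}$ is a clique, and additional edges $(u_i,v_{i-1}),(u_i,v_i)$ for all $i\in[m]$ (so each $v_i$ is adjacent exactly to $u_i$ and $u_{i+1}$). For a vertex $v$, $N(v)$ is its set of neighbours. For a positive integer $k$, $[k]=\{1,\dots,k\}$. For a labeling $f:V(G)\to[k]$ and $S\subseteq V(G)$, $f(S)=\sum_{u\in S}f(u)$. A labeling $f:V(G)\to[k]$ is an additive $k$-coloring if $f(N(u))\neq f(N(v))$ for every edge $(u,v)$ of $G$. The additive chromatic number $\eta(G)$ is the least $k$ for which $G$ has an additive $k$-coloring. *)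

theory Defs
  imports Complex_Main
begin

text \<open>A finite simple graph is given by a vertex set VV and a symmetric irreflexive
adjacency relation E (only its restriction to VV matters).\<close>

definition nbhd :: "'a set \<Rightarrow> ('a \<Rightarrow> 'a \<Rightarrow> bool) \<Rightarrow> 'a \<Rightarrow> 'a set" where
  "nbhd VV E v = {u \<in> VV. E v u}"

definition additive_coloring ::
  "'a set \<Rightarrow> ('a \<Rightarrow> 'a \<Rightarrow> bool) \<Rightarrow> nat \<Rightarrow> ('a \<Rightarrow> nat) \<Rightarrow> bool" where
  "additive_coloring VV E k f \<longleftrightarrow>
     (\<forall>v\<in>VV. f v \<in> {1..k}) \<and>
     (\<forall>u\<in>VV. \<forall>v\<in>VV. E u v \<longrightarrow> sum f (nbhd VV E u) \<noteq> sum f (nbhd VV E v))"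

definition additive_chromatic_number :: "'a set \<Rightarrow> ('a \<Rightarrow> 'a \<Rightarrow> bool) \<Rightarrow> nat" where
  "additive_chromatic_number VV E = (LEAST k. k \<ge> 1 \<and> (\<exists>f. additive_coloring VV E k f))"

datatype ksv = U nat | V nat

definition ks_verts :: "nat \<Rightarrow> ksv set" where
  "ks_verts m = U ` {1..m} \<union> V ` {1..m}"

definition nxt :: "nat \<Rightarrow> nat \<Rightarrow> nat" where
  "nxt m i = (if i = m then 1 else i + 1)"

fun ks_adj :: "nat \<Rightarrow> ksv \<Rightarrow> ksv \<Rightarrow> bool" where
  "ks_adj m (U i) (U j) = (i \<noteq> j)"
| "ks_adj m (U i) (V j) = (i = j \<or> i = nxt m j)"
| "ks_adj m (V j) (U i) = (i = j \<or> i = nxt m j)"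
| "ks_adj m (V i) (V j) = False"

end

theory Submission
  imports Defs
begin

text \<open>
  Write \<open>S\<close> for the total label of the clique and \<open>k\<close> for the largest label.
  The neighbourhood sum of \<open>U i\<close> is \<open>S - f (U i) + f (V i) + f (V (i - 1))\<close>, so the \<open>m\<close>
  pairwise distinct sums of the clique vertices lie in an interval of \<open>3 k - 2\<close> integers;
  hence \<open>m + 2 \<le> 3 k\<close>. Conversely, for \<open>3 k \<le> m + 4\<close> an explicit labeling makes the
  clique sums equal to \<open>S\<close> plus pairwise distinct offsets, and all of them exceed \<open>2 k\<close>,
  the largest possible neighbourhood sum of a vertex \<open>V j\<close>.
\<close>

definition prv :: "nat \<Rightarrow> nat \<Rightarrow> nat" where
  "prv m i = (if i = 1 then m else i - 1)"

lemma U_in_ks_verts [simp]: "U i \<in> ks_verts m \<longleftrightarrow> i \<in> {1..m}"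
  and V_in_ks_verts [simp]: "V i \<in> ks_verts m \<longleftrightarrow> i \<in> {1..m}"
  by (auto simp: ks_verts_def)

lemma prv_in_range: "m \<ge> 2 \<Longrightarrow> i \<in> {1..m} \<Longrightarrow> prv m i \<in> {1..m}"
  by (auto simp: prv_def)

lemma nxt_in_range: "m \<ge> 2 \<Longrightarrow> i \<in> {1..m} \<Longrightarrow> nxt m i \<in> {1..m}"
  by (auto simp: nxt_def)

lemma nbhd_ks_U:
  assumes "m \<ge> 2" "i \<in> {1..m}"
  shows "nbhd (ks_verts m) (ks_adj m) (U i) = U ` ({1..m} - {i}) \<union> {V i, V (prv m i)}"
proof (rule set_eqI)
  fix x
  show "x \<in> nbhd (ks_verts m) (ks_adj m) (U i) \<longleftrightarrow> x \<in> U ` ({1..m} - {i}) \<union> {V i, V (prv m i)}"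
    using assms
    by (cases x) (force simp: nbhd_def ks_verts_def prv_def nxt_def split: if_splits)+
qed

lemma nbhd_ks_V:
  assumes "m \<ge> 2" "j \<in> {1..m}"
  shows "nbhd (ks_verts m) (ks_adj m) (V j) = {U j, U (nxt m j)}"
proof (rule set_eqI)
  fix x
  show "x \<in> nbhd (ks_verts m) (ks_adj m) (V j) \<longleftrightarrow> x \<in> {U j, U (nxt m j)}"
    using assms by (cases x) (auto simp: nbhd_def ks_verts_def nxt_def split: if_splits)
qed

lemma sum_nbhd_ks_U:
  assumes "m \<ge> 2" "i \<in> {1..m}"
  shows "sum f (nbhd (ks_verts m) (ks_adj m) (U i)) =
    (\<Sum>j\<in>{1..m} - {i}. f (U j)) + f (V i) + f (V (prv m i))"
proof -
  have "prv m i \<noteq> i"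
    using assms by (auto simp: prv_def)
  have "sum f (U ` ({1..m} - {i}) \<union> {V i, V (prv m i)}) =
      sum f (U ` ({1..m} - {i})) + sum f {V i, V (prv m i)}"
    by (rule sum.union_disjoint) auto
  also have "sum f (U ` ({1..m} - {i})) = (\<Sum>j\<in>{1..m} - {i}. f (U j))"
    by (subst sum.reindex) (auto simp: inj_on_def)
  also have "sum f {V i, V (prv m i)} = f (V i) + f (V (prv m i))"
    using \<open>prv m i \<noteq> i\<close> by simp
  finally show ?thesis
    using nbhd_ks_U[OF assms] by (simp add: add.assoc)
qed

lemma sum_nbhd_ks_U_add:
  assumes "m \<ge> 2" "i \<in> {1..m}"
  shows "sum f (nbhd (ks_verts m) (ks_adj m) (U i)) + f (U i) =
    (\<Sum>j\<in>{1..m}. f (U j)) + f (V i) + f (V (prv m i))"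
proof -
  have "(\<Sum>j\<in>{1..m}. f (U j)) = f (U i) + (\<Sum>j\<in>{1..m} - {i}. f (U j))"
    using assms(2) by (subst sum.remove[of _ i]) auto
  then show ?thesis
    using sum_nbhd_ks_U[OF assms, of f] by (simp add: ac_simps)
qed

lemma sum_nbhd_ks_V:
  assumes "m \<ge> 2" "j \<in> {1..m}"
  shows "sum f (nbhd (ks_verts m) (ks_adj m) (V j)) = f (U j) + f (U (nxt m j))"
proof -
  have "nxt m j \<noteq> j"
    using assms by (auto simp: nxt_def)
  then show ?thesis
    using nbhd_ks_V[OF assms] by simp
qed

lemma additive_coloring_ks_bound:
  assumes m: "m \<ge> 2" and f: "additive_coloring (ks_verts m) (ks_adj m) k f"
  shows "m + 2 \<le> 3 * k"
proof -
  define S where "S = (\<Sum>j\<in>{1..m}. f (U j))"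
  define s where "s i = sum f (nbhd (ks_verts m) (ks_adj m) (U i))" for i
  have label_range: "f v \<in> {1..k}" if "v \<in> ks_verts m" for v
    using f that by (auto simp: additive_coloring_def)
  have inj: "inj_on (\<lambda>i. s i + k) {1..m}"
  proof (rule inj_onI, rule ccontr)
    fix i j
    assume ij: "i \<in> {1..m}" "j \<in> {1..m}" "s i + k = s j + k" "i \<noteq> j"
    then have "U i \<in> ks_verts m" "U j \<in> ks_verts m" "ks_adj m (U i) (U j)"
      by simp_all
    moreover have "s i = s j"
      using ij(3) by simp
    ultimately show False
      using f unfolding additive_coloring_def s_def by blast
  qed
  have "(\<lambda>i. s i + k) ` {1..m} \<subseteq> {S + 2..S + 3 * k - 1}"
  proof clarify
    fix i
    assume i: "i \<in> {1..m}"
    have "s i + f (U i) = S + f (V i) + f (V (prv m i))"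
      using sum_nbhd_ks_U_add[OF m i, of f] unfolding S_def s_def .
    moreover have "f (U i) \<in> {1..k}" "f (V i) \<in> {1..k}" "f (V (prv m i)) \<in> {1..k}"
      using label_range i prv_in_range[OF m i] by auto
    ultimately show "s i + k \<in> {S + 2..S + 3 * k - 1}"
      by auto
  qed
  then have "card ((\<lambda>i. s i + k) ` {1..m}) \<le> card {S + 2..S + 3 * k - 1}"
    by (rule card_mono[rotated]) simp
  then show ?thesis
    using card_image[OF inj] m by simp
qed

text \<open>The labeling for \<open>m = L + 2 k - 2\<close> with \<open>1 \<le> L \<le> k\<close>.\<close>

definition sun_coloring :: "nat \<Rightarrow> nat \<Rightarrow> ksv \<Rightarrow> nat" where
  "sun_coloring L k v = (case v of
      U i \<Rightarrow> if i = 1 then k else if i \<le> L then k + 2 - i else 1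
    | V i \<Rightarrow> if i \<le> L then 1 else (i - L + 1) div 2 + 1)"

definition sun_offset :: "nat \<Rightarrow> nat \<Rightarrow> nat \<Rightarrow> int" where
  "sun_offset L k i =
    (if i = 1 then 1 else if i \<le> L then int i - int k else int i - int L + 1)"

lemma inj_sun_offset: "L \<le> k \<Longrightarrow> inj (sun_offset L k)"
  by (rule injI) (auto simp: sun_offset_def split: if_splits)

context
  fixes m L k :: nat
  assumes L_pos: "1 \<le> L" and L_le: "L \<le> k" and k_ge: "2 \<le> k" and m_eq: "m = L + 2 * k - 2"
begin

lemma sun_coloring_range: "v \<in> ks_verts m \<Longrightarrow> sun_coloring L k v \<in> {1..k}"
proof (induction v)
  case (V i)
  then have "(i - L + 1) div 2 \<le> (2 * k - 1) div 2"
    using m_eq L_pos k_ge by (intro div_le_mono) auto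
  also have "\<dots> = k - 1"
    using k_ge by presburger
  finally show ?case
    using k_ge by (auto simp: sun_coloring_def)
qed (use L_le k_ge in \<open>auto simp: sun_coloring_def\<close>)

lemma sun_coloring_V_m: "sun_coloring L k (V m) = k"
  using m_eq L_pos k_ge by (simp add: sun_coloring_def) presburger

lemma sum_nbhd_sun_coloring_U:
  assumes i: "i \<in> {1..m}"
  shows "int (sum (sun_coloring L k) (nbhd (ks_verts m) (ks_adj m) (U i))) =
    int (\<Sum>j\<in>{1..m}. sun_coloring L k (U j)) + sun_offset L k i"
proof -
  have m: "m \<ge> 2"
    using m_eq L_pos k_ge by simp
  have "int (sun_coloring L k (V i)) + int (sun_coloring L k (V (prv m i)))
      = sun_offset L k i + int (sun_coloring L k (U i))"
  proof -
    consider "i = 1" | "2 \<le> i" "i \<le> L" | "i = L + 1" | "L + 2 \<le> i"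
      using i by (cases "i \<le> L"; cases "i = 1"; cases "i = L + 1") auto
    then show ?thesis
    proof cases
      case 1
      then show ?thesis
        using sun_coloring_V_m L_pos by (simp add: sun_coloring_def sun_offset_def prv_def)
    next
      case 2
      then show ?thesis
        using L_le by (simp add: sun_coloring_def sun_offset_def prv_def)
    next
      case 3
      then show ?thesis
        using L_pos by (simp add: sun_coloring_def sun_offset_def prv_def)
    next
      case 4
      then obtain n where "i = L + 2 + n"
        using le_Suc_ex by blast
      then show ?thesis
        by (simp add: sun_coloring_def sun_offset_def prv_def)
    qed
  qed
  then show ?thesis
    using arg_cong[OF sum_nbhd_ks_U_add[OF m i, of "sun_coloring L k"], of int] by simp
qed

text \<open>Both cases rely on the label \<open>k\<close> carried by \<open>U 1\<close>, respectively by \<open>V m\<close>.\<close>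

lemma sum_nbhd_sun_coloring_U_ge:
  assumes i: "i \<in> {1..m}"
  shows "m + k \<le> sum (sun_coloring L k) (nbhd (ks_verts m) (ks_adj m) (U i))"
proof -
  have m: "m \<ge> 2"
    using m_eq L_pos k_ge by simp
  have card_le: "card A \<le> (\<Sum>j\<in>A. sun_coloring L k (U j))" if "A \<subseteq> {1..m}" for A
    using sum_mono[of A "\<lambda>_. 1::nat" "\<lambda>j. sun_coloring L k (U j)"] sun_coloring_range that
    by force
  have V_pos: "1 \<le> sun_coloring L k (V j)" if "j \<in> {1..m}" for j
    using sun_coloring_range[of "V j"] that by auto
  show ?thesis
  proof (cases "i = 1")
    case True
    have "m - 1 \<le> (\<Sum>j\<in>{1..m} - {1}. sun_coloring L k (U j))"
      using card_le[of "{1..m} - {1}"] m by simp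
    moreover have "prv m i = m"
      using True by (simp add: prv_def)
    ultimately show ?thesis
      using sum_nbhd_ks_U[OF m i, of "sun_coloring L k"] True sun_coloring_V_m V_pos[of 1] m
      by simp
  next
    case False
    have "(\<Sum>j\<in>{1..m} - {i}. sun_coloring L k (U j)) =
        k + (\<Sum>j\<in>{1..m} - {i} - {1}. sun_coloring L k (U j))"
      using False i m by (subst sum.remove[of _ 1]) (auto simp: sun_coloring_def)
    moreover have "m - 2 \<le> (\<Sum>j\<in>{1..m} - {i} - {1}. sun_coloring L k (U j))"
    proof -
      have "card ({1..m} - {i} - {1}) = m - 2"
        using i False by (simp add: card_Diff_subset)
      then show ?thesis
        using card_le[of "{1..m} - {i} - {1}"] by auto
    qed
    ultimately show ?thesis
      using sum_nbhd_ks_U[OF m i, of "sun_coloring L k"] V_pos[OF i] V_pos[OF prv_in_range[OF m i]] m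
      by linarith
  qed
qed

lemma additive_coloring_sun_coloring:
  "additive_coloring (ks_verts m) (ks_adj m) k (sun_coloring L k)"
proof -
  have m: "m \<ge> 2" and k_less: "k < m"
    using m_eq L_pos k_ge by simp_all
  let ?s = "\<lambda>v. sum (sun_coloring L k) (nbhd (ks_verts m) (ks_adj m) v)"
  have UU: "?s (U i) \<noteq> ?s (U j)" if "i \<in> {1..m}" "j \<in> {1..m}" "i \<noteq> j" for i j
  proof
    assume "?s (U i) = ?s (U j)"
    then have "sun_offset L k i = sun_offset L k j"
      using sum_nbhd_sun_coloring_U[OF that(1)] sum_nbhd_sun_coloring_U[OF that(2)] by simp
    then show False
      using inj_sun_offset[OF L_le] that(3) by (simp add: inj_eq)
  qed
  have UV: "?s (V j) < ?s (U i)" if "i \<in> {1..m}" "j \<in> {1..m}" for i j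
  proof -
    have "?s (V j) = sun_coloring L k (U j) + sun_coloring L k (U (nxt m j))"
      by (rule sum_nbhd_ks_V[OF m that(2)])
    also have "\<dots> \<le> k + k"
      using sun_coloring_range[of "U j"] sun_coloring_range[of "U (nxt m j)"]
        that(2) nxt_in_range[OF m that(2)] by (intro add_mono) auto
    also have "\<dots> < m + k"
      using k_less by simp
    also have "\<dots> \<le> ?s (U i)"
      by (rule sum_nbhd_sun_coloring_U_ge[OF that(1)])
    finally show ?thesis .
  qed
  then have VU: "?s (V j) \<noteq> ?s (U i)" "?s (U i) \<noteq> ?s (V j)"
    if "i \<in> {1..m}" "j \<in> {1..m}" for i j
    using that by (simp_all add: less_imp_neq less_imp_neq[symmetric])
  show ?thesis
    unfolding additive_coloring_def
  proof (intro conjI ballI impI)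
    fix u v
    assume "u \<in> ks_verts m" "v \<in> ks_verts m" "ks_adj m u v"
    then show "?s u \<noteq> ?s v"
      by (cases u; cases v) (simp_all add: UU VU)
  qed (fact sun_coloring_range)
qed

end

lemma ks_additive_coloring_exists:
  assumes "m \<ge> 3" "m + 2 \<le> 3 * k" "3 * k \<le> m + 4"
  shows "additive_coloring (ks_verts m) (ks_adj m) k (sun_coloring (m + 2 - 2 * k) k)"
  using assms by (intro additive_coloring_sun_coloring) arith+

lemma additive_chromatic_number_eqI:
  assumes "1 \<le> k" "additive_coloring VV E k f"
    and "\<And>j g. additive_coloring VV E j g \<Longrightarrow> k \<le> j"
  shows "additive_chromatic_number VV E = k"
  unfolding additive_chromatic_number_def
  using assms by (intro Least_equality) auto

lemma nat_ceiling_divide_3: "nat \<lceil>real n / 3\<rceil> = (n + 2) div 3"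
proof -
  have "\<lceil>real n / 3\<rceil> = - (- int n div 3)"
    using ceiling_divide_eq_div[of "int n" 3] by simp
  also have "\<dots> = int ((n + 2) div 3)"
    by presburger
  finally show ?thesis
    by simp
qed

theorem mainTheorem14:
  fixes m :: nat
  assumes "m \<ge> 3"
  shows "additive_chromatic_number (ks_verts m) (ks_adj m) = nat \<lceil>real (m + 2) / 3\<rceil>"
proof -
  define k where "k = (m + 2 + 2) div 3"
  have k_lower: "m + 2 \<le> 3 * k" and k_upper: "3 * k \<le> m + 4"
    unfolding k_def by presburger+
  have "additive_chromatic_number (ks_verts m) (ks_adj m) = k"
  proof (rule additive_chromatic_number_eqI)
    show "1 \<le> k"
      using k_lower by linarith
    show "additive_coloring (ks_verts m) (ks_adj m) k (sun_coloring (m + 2 - 2 * k) k)"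
      using assms k_lower k_upper by (rule ks_additive_coloring_exists)
  next
    fix j g
    assume "additive_coloring (ks_verts m) (ks_adj m) j g"
    then have "m + 2 \<le> 3 * j"
      using assms by (intro additive_coloring_ks_bound) auto
    then show "k \<le> j"
      using k_upper by linarith
  qed
  then show ?thesis
    unfolding nat_ceiling_divide_3 k_def .
qed

end
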